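(* Let $N_1,N_2\ge1$ and $m_1\ge1$, $m_2\ge1$ be integers with $m_1+m_2<N_1N_2$. Let $A=A(N_1,N_2,m_1,m_2)$ be the set of $N_1\times N_2$ matrices $X=(x_{ij})$, $i\in\mathbb{Z}/N_1\mathbb{Z}$, $j\in\mathbb{Z}/N_2\mathbb{Z}$, having exactly $m_1$ entries equal to $1$, exactly $m_2$ entries equal to $2$, and all other entries equal to $0$. Define the unary operation $f:A\to A$ by $f(X)=Y(U(X))$, where: (i) $U(X)=(u_{ij})$ is obtained from $X$ by moving every entry $1$ one position to the right cyclically whenever the position to its right is $0$: namely $u_{ij}=1$ if ($x_{ij}=1$ and $x_{i,j+1}\neq 0$) or ($x_{ij}=0$ and $x_{i,j-1}=1$); $u_{ij}=2$ if $x_{ij}=2$; and $u_{ij}=0$ otherwise (indices $j\pm1$ modulo $N_2$); (ii) $Y(U)=(y_{ij})$ is obtained from $U$ by moving every entry $2$ from position $(i,j)$ to position $(i+1,j)$ (modulo $N_1$) whenever $u_{i+1,j}=0$: namely $y_{ij}=2$ if ($u_{ij}=2$ and $u_{i+1,j}\neq0$) or ($u_{ij}=0$ and $u_{i-1,j}=2$); $y_{ij}=1$ if $u_{ij}=1$; and $y_{ij}=0$ otherwise. Let $B\subseteq A$ be the set of matrices $X$ such that every entry $1$ of $X$ has a $0$ immediately to its right in $X$ (i.e. $x_{ij}=1\Rightarrow x_{i,j+1}=0$) and every entry $2$ of $U(X)$ has a $0$ at the next row position in $U(X)$ (i.e. $u_{ij}=2\Rightarrow u_{i+1,j}=0$).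 Let $f^1=f$, $f^t=f\circ f^{t-1}$, and let $C\subseteq A$ be the set of matrices $X$ for which there exists $t_0$ such that $f^t(X)\in B$ for all $t\ge t_0$. If the greatest common divisor of $N_1$ and $N_2$ is less than $3$, then no matrix belongs to $C$ (i.e. $C=\emptyset$).
   Context: Interpretation: $X\in A$ encodes a state of a deterministic Biham--Middleton--Levine type traffic system on an $N_1\times N_2$ torus, with $1$ = particle of the first type (moving along rows), $2$ = particle of the second type (moving along columns), $0$ = vacant cell; $f$ is one time step (first-type particles move, then second-type particles move); $B$ is the set of states in which every particle moves; $C$ is the set of states that eventually stay in free movement forever. *)

theory Defs
  imports Main
begin

text \<open>A state is a function X :: nat => nat => nat; only the entries with
  row index i < N1 and column index j < N2 are meaningful (indices taken in
  Z/N1 x Z/N2 represented by 0..N1-1 and 0..N2-1); entries outside are 0.\<close>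

type_synonym state = "nat \<Rightarrow> nat \<Rightarrow> nat"

definition bml_A :: "nat \<Rightarrow> nat \<Rightarrow> nat \<Rightarrow> nat \<Rightarrow> state set" where
  "bml_A N1 N2 m1 m2 = {X.
     (\<forall>i j. \<not> (i < N1 \<and> j < N2) \<longrightarrow> X i j = 0) \<and>
     (\<forall>i<N1. \<forall>j<N2. X i j \<in> {0, 1, 2}) \<and>
     card {(i, j). i < N1 \<and> j < N2 \<and> X i j = 1} = m1 \<and>
     card {(i, j). i < N1 \<and> j < N2 \<and> X i j = 2} = m2}"

definition bml_U :: "nat \<Rightarrow> nat \<Rightarrow> state \<Rightarrow> state" where
  "bml_U N1 N2 X = (\<lambda>i j.
     if i < N1 \<and> j < N2 then
       (if (X i j = 1 \<and> X i ((j + 1) mod N2) \<noteq> 0) \<or>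
           (X i j = 0 \<and> X i ((j + N2 - 1) mod N2) = 1) then 1
        else if X i j = 2 then 2 else 0)
     else 0)"

definition bml_Y :: "nat \<Rightarrow> nat \<Rightarrow> state \<Rightarrow> state" where
  "bml_Y N1 N2 U = (\<lambda>i j.
     if i < N1 \<and> j < N2 then
       (if (U i j = 2 \<and> U ((i + 1) mod N1) j \<noteq> 0) \<or>
           (U i j = 0 \<and> U ((i + N1 - 1) mod N1) j = 2) then 2
        else if U i j = 1 then 1 else 0)
     else 0)"

definition bml_f :: "nat \<Rightarrow> nat \<Rightarrow> state \<Rightarrow> state" where
  "bml_f N1 N2 X = bml_Y N1 N2 (bml_U N1 N2 X)"

definition bml_B :: "nat \<Rightarrow> nat \<Rightarrow> nat \<Rightarrow> nat \<Rightarrow> state set" where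
  "bml_B N1 N2 m1 m2 = {X \<in> bml_A N1 N2 m1 m2.
     (\<forall>i<N1. \<forall>j<N2. X i j = 1 \<longrightarrow> X i ((j + 1) mod N2) = 0) \<and>
     (\<forall>i<N1. \<forall>j<N2. bml_U N1 N2 X i j = 2 \<longrightarrow>
                      bml_U N1 N2 X ((i + 1) mod N1) j = 0)}"

definition bml_C :: "nat \<Rightarrow> nat \<Rightarrow> nat \<Rightarrow> nat \<Rightarrow> state set" where
  "bml_C N1 N2 m1 m2 = {X \<in> bml_A N1 N2 m1 m2.
     \<exists>t0. \<forall>t\<ge>t0. (bml_f N1 N2 ^^ t) X \<in> bml_B N1 N2 m1 m2}"

end

theory Submission
  imports Defs "HOL-Number_Theory.Cong"
begin

text \<open>In free flow every 1 moves one column to the right and every 2 one row down at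
  each step, so a 1 starting at (a, b) and a 2 starting at (c, d) are at (a, b + s) and
  (c + s, d) after s steps. If gcd N1 N2 \<le> 2, the Chinese remainder theorem yields s with
  b + s + 1 \<equiv> d (mod N2) and c + s + e \<equiv> a (mod N1) for e = 0 or e = 1: the 2 is then
  either directly to the right of the 1, or in the row above that cell, where it is blocked
  once the 1 has moved into the cell. Either way the state is not in free movement.\<close>

lemma chinese_remainder_gcd_int:
  fixes m n :: nat and x y :: int
  assumes "m > 0" "n > 0" and "int (gcd m n) dvd x - y"
  obtains s :: nat where "[int s = x] (mod int m)" "[int s = y] (mod int n)"
proof -
  obtain k where k: "[int m * k = y - x] (mod int n)"
    using cong_solve_dvd_int[of "int m" "int n" "y - x"] assms(3)
    by (auto simp: dvd_diff_commute)
  define s0 where "s0 = x + int m * k"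
  have "[s0 = x] (mod int m)"
    unfolding s0_def by (simp add: cong_iff_dvd_diff)
  moreover have "[s0 = y] (mod int n)"
    using cong_add[OF cong_refl[of x] k] unfolding s0_def by simp
  \<comment> \<open>the residue of s0 modulo m n is a nonnegative solution\<close>
  moreover have "int (nat (s0 mod (int m * int n))) = s0 mod (int m * int n)"
    using assms(1,2) by simp
  ultimately show ?thesis
    by (intro that[of "nat (s0 mod (int m * int n))"])
      (simp_all add: cong_def mod_mod_cancel)
qed

lemma collision_time_exists:
  fixes m n a b c d :: nat
  assumes "m > 0" "n > 0" and "gcd m n \<le> 2"
  obtains s e where "e \<le> 1" "[c + s + e = a] (mod m)" "[b + s + 1 = d] (mod n)"
proof -
  let ?y = "int d - int b - 1"
  obtain e :: nat where e: "e \<le> 1" "int (gcd m n) dvd (int a - int c - int e) - ?y"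
  proof (cases "int (gcd m n) dvd (int a - int c) - ?y")
    case True
    then show ?thesis using that[of 0] by simp
  next
    case False
    have "gcd m n = 1 \<or> gcd m n = 2"
      using assms gcd_pos_nat[of m n] by linarith
    then have "int (gcd m n) dvd (int a - int c - 1) - ?y"
      using False by (auto simp: algebra_simps)
    then show ?thesis using that[of 1] by simp
  qed
  obtain s where s: "[int s = int a - int c - int e] (mod int m)" "[int s = ?y] (mod int n)"
    using chinese_remainder_gcd_int[OF assms(1,2) e(2)] .
  have "[int (c + s + e) = int a] (mod int m)"
    using cong_add[OF cong_refl[of "int c + int e"] s(1)] by (simp add: algebra_simps)
  moreover have "[int (b + s + 1) = int d] (mod int n)"
    using cong_add[OF cong_refl[of "int b + 1"] s(2)] by (simp add: algebra_simps)
  ultimately show ?thesis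
    using that[OF e(1)] by (simp only: cong_int_iff)
qed

lemma Suc_mod_pred_mod:
  fixes j n :: nat
  assumes "j < n"
  shows "(Suc j mod n + n - 1) mod n = j"
  using assms by (cases "Suc j = n") simp_all

lemma bml_U_keeps_2:
  assumes "i < N1" "j < N2" "X i j = 2"
  shows "bml_U N1 N2 X i j = 2"
  using assms unfolding bml_U_def by simp

lemma bml_Y_keeps_1:
  assumes "i < N1" "j < N2" "U i j = 1"
  shows "bml_Y N1 N2 U i j = 1"
  using assms unfolding bml_Y_def by simp

lemma bml_B_U_moves_1_right:
  assumes "W \<in> bml_B N1 N2 m1 m2" "i < N1" "j < N2" "W i j = 1"
  shows "bml_U N1 N2 W i (Suc j mod N2) = 1"
proof -
  have "W i (Suc j mod N2) = 0"
    using assms unfolding bml_B_def by simp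
  then show ?thesis
    using assms(2-4) Suc_mod_pred_mod[OF assms(3)] unfolding bml_U_def by simp
qed

lemma bml_B_f_moves_1_right:
  assumes "W \<in> bml_B N1 N2 m1 m2" "i < N1" "j < N2" "W i j = 1"
  shows "bml_f N1 N2 W i (Suc j mod N2) = 1"
proof -
  have "Suc j mod N2 < N2"
    using assms(3) by simp
  then show ?thesis
    using bml_Y_keeps_1 assms(2) bml_B_U_moves_1_right[OF assms] unfolding bml_f_def by blast
qed

lemma bml_B_f_moves_2_down:
  assumes "W \<in> bml_B N1 N2 m1 m2" "i < N1" "j < N2" "W i j = 2"
  shows "bml_f N1 N2 W (Suc i mod N1) j = 2"
proof -
  have U: "bml_U N1 N2 W i j = 2"
    using bml_U_keeps_2 assms(2-4) .
  then have "bml_U N1 N2 W (Suc i mod N1) j = 0"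
    using assms(1-3) unfolding bml_B_def by simp
  then show ?thesis
    using U assms(2,3) Suc_mod_pred_mod[OF assms(2)] unfolding bml_f_def bml_Y_def by simp
qed

lemma bml_B_no_2_ahead_of_1:
  assumes "W \<in> bml_B N1 N2 m1 m2" "i < N1" "k < N1" "j < N2"
    and "W i j = 1" "W k (Suc j mod N2) = 2"
  shows "k \<noteq> i" "Suc k mod N1 \<noteq> i"
proof -
  have "W i (Suc j mod N2) = 0"
    using assms(1,2,4,5) unfolding bml_B_def by simp
  then show "k \<noteq> i"
    using assms(6) by auto
  \<comment> \<open>the 1 moves below the 2 during the first half-step and blocks it\<close>
  have "bml_U N1 N2 W k (Suc j mod N2) = 2"
    using bml_U_keeps_2 assms(3,4,6) by simp
  then have "bml_U N1 N2 W (Suc k mod N1) (Suc j mod N2) = 0"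
    using assms(1,3,4) unfolding bml_B_def by simp
  then show "Suc k mod N1 \<noteq> i"
    using bml_B_U_moves_1_right[OF assms(1,2,4,5)] by auto
qed

lemma bml_free_orbit_moves_1_right:
  assumes "\<forall>s. (bml_f N1 N2 ^^ s) Z \<in> bml_B N1 N2 m1 m2" "a < N1" "b < N2" "Z a b = 1"
  shows "(bml_f N1 N2 ^^ s) Z a ((b + s) mod N2) = 1"
proof (induction s)
  case 0
  then show ?case using assms(3,4) by simp
next
  case (Suc s)
  have "Suc ((b + s) mod N2) mod N2 = (b + Suc s) mod N2"
    by (simp add: mod_Suc_eq)
  then show ?case
    using bml_B_f_moves_1_right[OF spec[OF assms(1), of s] assms(2) _ Suc.IH] assms(3) by simp
qed

lemma bml_free_orbit_moves_2_down:
  assumes "\<forall>s. (bml_f N1 N2 ^^ s) Z \<in> bml_B N1 N2 m1 m2" "c < N1" "d < N2" "Z c d = 2"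
  shows "(bml_f N1 N2 ^^ s) Z ((c + s) mod N1) d = 2"
proof (induction s)
  case 0
  then show ?case using assms(2,4) by simp
next
  case (Suc s)
  have "Suc ((c + s) mod N1) mod N1 = (c + Suc s) mod N1"
    by (simp add: mod_Suc_eq)
  then show ?case
    using bml_B_f_moves_2_down[OF spec[OF assms(1), of s] _ assms(3) Suc.IH] assms(2) by simp
qed

lemma bml_C_imp_free_orbit:
  assumes "X \<in> bml_C N1 N2 m1 m2"
  obtains Z where "\<forall>s. (bml_f N1 N2 ^^ s) Z \<in> bml_B N1 N2 m1 m2"
proof -
  obtain t0 where t0: "\<forall>t\<ge>t0. (bml_f N1 N2 ^^ t) X \<in> bml_B N1 N2 m1 m2"
    using assms unfolding bml_C_def by blast
  have "(bml_f N1 N2 ^^ s) ((bml_f N1 N2 ^^ t0) X) = (bml_f N1 N2 ^^ (s + t0)) X" for s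
    by (simp add: funpow_add)
  then show ?thesis
    using that t0 by (metis le_add2)
qed

lemma bml_A_has_entry:
  assumes "X \<in> bml_A N1 N2 m1 m2" "v = 1 \<and> m1 > 0 \<or> v = 2 \<and> m2 > 0"
  obtains i j where "i < N1" "j < N2" "X i j = v"
proof -
  have "card {(i, j). i < N1 \<and> j < N2 \<and> X i j = v} > 0"
    using assms unfolding bml_A_def by auto
  then show ?thesis
    using that by (auto simp: card_gt_0_iff)
qed

theorem theorem2:
  fixes N1 N2 m1 m2 :: nat
  assumes "N1 \<ge> 1" and "N2 \<ge> 1" and "m1 \<ge> 1" and "m2 \<ge> 1"
    and "m1 + m2 < N1 * N2"
    and "gcd N1 N2 < 3"
  shows "bml_C N1 N2 m1 m2 = {}"
proof (rule equals0I)
  fix X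
  assume "X \<in> bml_C N1 N2 m1 m2"
  then obtain Z where free: "\<forall>s. (bml_f N1 N2 ^^ s) Z \<in> bml_B N1 N2 m1 m2"
    by (rule bml_C_imp_free_orbit)
  have ZA: "Z \<in> bml_A N1 N2 m1 m2"
    using spec[OF free, of 0] unfolding bml_B_def by simp
  obtain a b where ab: "a < N1" "b < N2" "Z a b = 1"
    using bml_A_has_entry[OF ZA] assms(3) by auto
  obtain c d where cd: "c < N1" "d < N2" "Z c d = 2"
    using bml_A_has_entry[OF ZA] assms(4) by auto
  have "0 < N1" "0 < N2" "gcd N1 N2 \<le> 2"
    using assms(1,2,6) by auto
  then obtain s e where e: "e \<le> 1" and "[c + s + e = a] (mod N1)" "[b + s + 1 = d] (mod N2)"
    by (rule collision_time_exists)
  then have meet: "((c + s) mod N1 + e) mod N1 = a" "Suc ((b + s) mod N2) mod N2 = d"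
    using ab(1) cd(2) by (simp_all add: cong_def mod_add_left_eq mod_Suc_eq)
  have "(bml_f N1 N2 ^^ s) Z ((c + s) mod N1) (Suc ((b + s) mod N2) mod N2) = 2"
    using bml_free_orbit_moves_2_down[OF free cd] meet(2) by simp
  then have "(c + s) mod N1 \<noteq> a" "Suc ((c + s) mod N1) mod N1 \<noteq> a"
    using bml_B_no_2_ahead_of_1[OF spec[OF free] ab(1) _ _ bml_free_orbit_moves_1_right[OF free ab]]
      ab(1,2) by simp_all
  then show False
    using meet(1) e ab(1) by (cases e) auto
qed

end
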